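(* For any valid $(\eta,\gamma)$, when WSU-UX is run with $K=2$ on the two-phase loss sequence, almost surely $$\sum_{t=1}^T\sum_{j\in[K]}\pi_{t,j}\hat\ell_{t,j}-\sum_{t=1}^T\hat\ell_{t,1}\ \ge\ \frac{\ln\pi_{T+1,1}+\ln K}{\eta}+\frac{\eta}{4}\sum_{t=1}^T\Bigl(\hat\ell_{t,1}-\sum_{j\in[K]}\pi_{t,j}\hat\ell_{t,j}\Bigr)^2.$$
   Context: WSU-UX. Fix integers $K\ge 2$ and $T\ge 1$ and hyperparameters $\eta,\gamma$. The pair $(\eta,\gamma)$ is called valid if $\eta,\gamma\in(0,1/2)$ and $\eta K/\gamma\le 1/2$. Given a fixed loss sequence $\ell_t\in[0,1]^K$, WSU-UX sets $\pi_{1,i}=1/K$ and in each round $t$: forms $\tilde\pi_{t,i}=(1-\gamma)\pi_{t,i}+\gamma/K$; draws $I_t$ with $\Pr(I_t=i\mid\mathcal F_{t-1})=\tilde\pi_{t,i}$; sets $\hat\ell_{t,i}=\ell_{t,i}\mathbf 1[I_t=i]/\tilde\pi_{t,i}$; and updates $\pi_{t+1,i}=\pi_{t,i}\bigl(1-\eta(\hat\ell_{t,i}-\sum_{j}\pi_{t,j}\hat\ell_{t,j})\bigr)$; $\mathcal F_t$ is the history generated by $I_1,\dots,I_t$. Two-phase loss sequence ($K=2$, $T$ a multiple of $100$, $T_1=T/100$): $\ell_{t,1}=1,\ell_{t,2}=0$ for $1\le t\le T_1$ and $\ell_{t,1}=0,\ell_{t,2}=1$ for $T_1<t\le T$. 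*)

theory Defs
  imports "HOL-Probability.Probability"
begin

text \<open>WSU-UX with K arms indexed 1..K, rounds indexed 1..T.
  Losses: l t i.  The arm choices are given as a function I :: nat => nat
  (I t = arm chosen in round t, t >= 1).\<close>

definition wsu_tilde :: "nat \<Rightarrow> real \<Rightarrow> (nat \<Rightarrow> real) \<Rightarrow> nat \<Rightarrow> real" where
  "wsu_tilde K \<gamma> p i = (1 - \<gamma>) * p i + \<gamma> / real K"

definition lhat_of :: "nat \<Rightarrow> real \<Rightarrow> (nat \<Rightarrow> nat \<Rightarrow> real) \<Rightarrow> (nat \<Rightarrow> real) \<Rightarrow> nat \<Rightarrow> nat \<Rightarrow> nat \<Rightarrow> real" where
  "lhat_of K \<gamma> l p t It i = l t i * (if It = i then 1 else 0) / wsu_tilde K \<gamma> p i"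

text \<open>wsu_pi K eta gamma l I t i = pi_{t,i} for t >= 1 (index 0 is a dummy).\<close>
primrec wsu_pi :: "nat \<Rightarrow> real \<Rightarrow> real \<Rightarrow> (nat \<Rightarrow> nat \<Rightarrow> real) \<Rightarrow> (nat \<Rightarrow> nat) \<Rightarrow> nat \<Rightarrow> nat \<Rightarrow> real" where
  "wsu_pi K \<eta> \<gamma> l I 0 i = 1 / real K"
| "wsu_pi K \<eta> \<gamma> l I (Suc t) i =
     (if t = 0 then 1 / real K
      else wsu_pi K \<eta> \<gamma> l I t i *
        (1 - \<eta> * (lhat_of K \<gamma> l (wsu_pi K \<eta> \<gamma> l I t) t (I t) i
                 - (\<Sum>j\<in>{1..K}. wsu_pi K \<eta> \<gamma> l I t j * lhat_of K \<gamma> l (wsu_pi K \<eta> \<gamma> l I t) t (I t) j))))"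

definition wsu_lhat :: "nat \<Rightarrow> real \<Rightarrow> real \<Rightarrow> (nat \<Rightarrow> nat \<Rightarrow> real) \<Rightarrow> (nat \<Rightarrow> nat) \<Rightarrow> nat \<Rightarrow> nat \<Rightarrow> real" where
  "wsu_lhat K \<eta> \<gamma> l I t i = lhat_of K \<gamma> l (wsu_pi K \<eta> \<gamma> l I t) t (I t) i"

text \<open>A history [I_1,...,I_t] as a function of the round index.\<close>
definition hist_fun :: "nat list \<Rightarrow> nat \<Rightarrow> nat" where
  "hist_fun h t = h ! (t - 1)"

text \<open>Law of the history (I_1,...,I_t): I_{t+1} given the past is drawn
  with probabilities tilde pi_{t+1,i}, i = 1..K.\<close>
primrec wsu_hist :: "nat \<Rightarrow> real \<Rightarrow> real \<Rightarrow> (nat \<Rightarrow> nat \<Rightarrow> real) \<Rightarrow> nat \<Rightarrow> nat list pmf" where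
  "wsu_hist K \<eta> \<gamma> l 0 = return_pmf []"
| "wsu_hist K \<eta> \<gamma> l (Suc t) =
     wsu_hist K \<eta> \<gamma> l t \<bind> (\<lambda>h. map_pmf (\<lambda>i. h @ [i])
        (pmf_of_list (map (\<lambda>i. (i, wsu_tilde K \<gamma> (wsu_pi K \<eta> \<gamma> l (hist_fun h) (Suc t)) i)) [1..<K+1])))"

definition valid_params :: "nat \<Rightarrow> real \<Rightarrow> real \<Rightarrow> bool" where
  "valid_params K \<eta> \<gamma> \<longleftrightarrow> 0 < \<eta> \<and> \<eta> < 1/2 \<and> 0 < \<gamma> \<and> \<gamma> < 1/2 \<and> \<eta> * real K / \<gamma> \<le> 1/2"

definition two_phase_loss :: "nat \<Rightarrow> nat \<Rightarrow> nat \<Rightarrow> real" where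
  "two_phase_loss T t i =
     (if t \<le> T div 100 then (if i = 1 then 1 else 0) else (if i = 2 then 1 else 0))"

end

theory Submission imports Defs begin

text \<open>The bound holds pathwise, for every sequence of drawn arms and every loss sequence with
  values in \<open>[0, 1]\<close>. Because \<open>\<eta>K/\<gamma> \<le> 1/2\<close> and
  every mixed probability is at least \<open>\<gamma>/K\<close>, each scaled estimate \<open>\<eta> * lhat t j\<close> lies in
  \<open>[0, 1/2]\<close>, and so does its \<open>\<pi> t\<close>-average. Hence the weights stay a probability vector
  with positive entries, and arm \<open>i\<close> is multiplied in round \<open>t\<close> by a factor \<open>1 - y\<^sub>t\<close>
  with \<open>|y\<^sub>t| \<le> 1/2\<close>. Taking logarithms, \<open>ln (\<pi> (n+1) i) = - ln K + \<Sum>\<^sub>t ln (1 - y\<^sub>t)\<close>,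
  and \<open>ln (1 - y) \<le> - y - y\<^sup>2/4\<close> on \<open>|y| \<le> 1/2\<close> gives the claim after dividing by \<open>\<eta>\<close>.\<close>

lemma ln_one_minus_le:
  fixes y :: real
  assumes "\<bar>y\<bar> \<le> 1/2"
  shows "ln (1 - y) \<le> - y - y\<^sup>2 / 4"
proof -
  define f where "f x = - x - x\<^sup>2 / 4 - ln (1 - x)" for x :: real
  have f_deriv: "DERIV f x :> x * (1 + x) / (2 * (1 - x))" if "\<bar>x\<bar> \<le> 1/2" for x
  proof -
    have "DERIV f x :> -1 - 2 * x / 4 - (-1) / (1 - x)"
      unfolding f_def using that by (auto intro!: derivative_eq_intros)
    moreover have "-1 - 2 * x / 4 - (-1) / (1 - x) = x * (1 + x) / (2 * (1 - x))"
      using that by (simp add: field_simps)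
    ultimately show ?thesis by simp
  qed
  have "f 0 \<le> f y"
  proof (cases "0 \<le> y")
    case True
    show ?thesis
    proof (rule DERIV_nonneg_imp_nondecreasing[OF True])
      fix x assume "0 \<le> x" "x \<le> y"
      then show "\<exists>z. DERIV f x :> z \<and> 0 \<le> z"
        using assms f_deriv[of x] by (intro exI[of _ "x * (1 + x) / (2 * (1 - x))"]) auto
    qed
  next
    case False
    show ?thesis
    proof (rule DERIV_nonpos_imp_nonincreasing[of y 0])
      fix x assume x: "y \<le> x" "x \<le> 0"
      then have "x * (1 + x) / (2 * (1 - x)) \<le> 0"
        using assms by (intro divide_nonpos_pos mult_nonpos_nonneg) auto
      then show "\<exists>z. DERIV f x :> z \<and> z \<le> 0"
        using f_deriv[of x] x assms by auto
    qed (use False in simp)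
  qed
  then show ?thesis unfolding f_def by simp
qed

locale wsu_ux_run =
  fixes K :: nat and \<eta> \<gamma> :: real and l :: "nat \<Rightarrow> nat \<Rightarrow> real" and I :: "nat \<Rightarrow> nat"
  assumes K_pos: "1 \<le> K"
    and valid: "valid_params K \<eta> \<gamma>"
    and loss_nonneg: "0 \<le> l t i"
    and loss_le_1: "l t i \<le> 1"
begin

abbreviation \<pi> where "\<pi> \<equiv> wsu_pi K \<eta> \<gamma> l I"
abbreviation lhat where "lhat \<equiv> wsu_lhat K \<eta> \<gamma> l I"
abbreviation mix where "mix t \<equiv> \<Sum>j\<in>{1..K}. \<pi> t j * lhat t j"

lemma \<eta>_pos: "0 < \<eta>"
  using valid by (simp add: valid_params_def)

lemma \<pi>_Suc: "1 \<le> t \<Longrightarrow> \<pi> (Suc t) i = \<pi> t i * (1 - \<eta> * (lhat t i - mix t))"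
  by (simp add: wsu_lhat_def)

lemma \<pi>_1: "\<pi> (Suc 0) i = 1 / K"
  by simp

text \<open>Unfolding the recursion would expose the raw \<open>lhat_of\<close> terms, so from here on it is
  used only through \<open>\<pi>_Suc\<close>.\<close>
declare wsu_pi.simps(2) [simp del]

lemma lhat_of_bounds:
  assumes "0 \<le> p i"
  shows "0 \<le> lhat_of K \<gamma> l p t It i" "\<eta> * lhat_of K \<gamma> l p t It i \<le> 1/2"
proof -
  from valid have \<gamma>: "0 < \<gamma>" "\<gamma> < 1/2" and \<eta>K: "\<eta> * K / \<gamma> \<le> 1/2"
    by (auto simp: valid_params_def)
  define c where "c = l t i * (if It = i then 1 else 0)"
  have c: "0 \<le> c" "c \<le> 1"
    unfolding c_def using loss_nonneg[of t i] loss_le_1[of t i] by auto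
  have tilde: "\<gamma> / K \<le> wsu_tilde K \<gamma> p i"
    unfolding wsu_tilde_def using \<gamma> assms by (simp add: mult_nonneg_nonneg)
  have "0 < \<gamma> / K"
    using \<gamma> K_pos by simp
  with tilde have tilde_pos: "0 < wsu_tilde K \<gamma> p i"
    by linarith
  have eq: "lhat_of K \<gamma> l p t It i = c / wsu_tilde K \<gamma> p i"
    unfolding lhat_of_def c_def by simp
  show "0 \<le> lhat_of K \<gamma> l p t It i"
    using eq c tilde_pos by simp
  have "c / wsu_tilde K \<gamma> p i \<le> 1 / (\<gamma> / K)"
    using c tilde tilde_pos \<gamma> K_pos by (intro frac_le) auto
  then have "\<eta> * lhat_of K \<gamma> l p t It i \<le> \<eta> * (K / \<gamma>)"
    unfolding eq using \<eta>_pos by (simp add: mult_left_mono del: times_divide_eq_right)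
  then show "\<eta> * lhat_of K \<gamma> l p t It i \<le> 1/2"
    using \<eta>K by (metis order_trans times_divide_eq_right)
qed

lemma \<eta>_lhat_bounds:
  assumes "0 \<le> \<pi> t i"
  shows "0 \<le> \<eta> * lhat t i" "\<eta> * lhat t i \<le> 1/2"
  using lhat_of_bounds[of "\<pi> t" i t "I t", OF assms] \<eta>_pos
  by (simp_all add: wsu_lhat_def)

lemma \<eta>_mix_bounds:
  assumes nonneg: "\<And>j. j \<in> {1..K} \<Longrightarrow> 0 \<le> \<pi> t j" and sum1: "(\<Sum>j\<in>{1..K}. \<pi> t j) = 1"
  shows "0 \<le> \<eta> * mix t" "\<eta> * mix t \<le> 1/2"
proof -
  have "\<eta> * mix t = (\<Sum>j\<in>{1..K}. \<pi> t j * (\<eta> * lhat t j))"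
    by (simp add: sum_distrib_left algebra_simps)
  moreover have "0 \<le> (\<Sum>j\<in>{1..K}. \<pi> t j * (\<eta> * lhat t j))"
    using nonneg \<eta>_lhat_bounds(1) by (intro sum_nonneg) simp
  moreover have "(\<Sum>j\<in>{1..K}. \<pi> t j * (\<eta> * lhat t j)) \<le> (\<Sum>j\<in>{1..K}. \<pi> t j * (1/2))"
    using nonneg \<eta>_lhat_bounds(2) by (intro sum_mono mult_left_mono) auto
  moreover have "(\<Sum>j\<in>{1..K}. \<pi> t j * (1/2)) = 1/2"
    using sum1 by (simp add: sum_divide_distrib[symmetric])
  ultimately show "0 \<le> \<eta> * mix t" "\<eta> * mix t \<le> 1/2"
    by linarith+
qed

lemma \<pi>_distribution:
  "1 \<le> t \<Longrightarrow> (\<forall>i\<in>{1..K}. 0 < \<pi> t i) \<and> (\<Sum>i\<in>{1..K}. \<pi> t i) = 1"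
proof (induction t)
  case (Suc t)
  show ?case
  proof (cases "t = 0")
    case True
    then show ?thesis using K_pos by (simp add: \<pi>_1)
  next
    case False
    then have t: "1 \<le> t" by simp
    with Suc.IH have pos: "\<And>i. i \<in> {1..K} \<Longrightarrow> 0 < \<pi> t i" and sum1: "(\<Sum>i\<in>{1..K}. \<pi> t i) = 1"
      by auto
    have mix: "0 \<le> \<eta> * mix t"
      using \<eta>_mix_bounds[of t] pos sum1 by (simp add: less_imp_le)
    have factor_pos: "0 < 1 - \<eta> * (lhat t i - mix t)" if "i \<in> {1..K}" for i
      using \<eta>_lhat_bounds(2)[of t i] pos[OF that] mix by (simp add: right_diff_distrib)
    \<comment> \<open>an opaque name for the mixture keeps the simplifier from distributing it\<close>
    define m where "m = mix t"
    have "(\<Sum>i\<in>{1..K}. \<pi> (Suc t) i) = (\<Sum>i\<in>{1..K}. \<pi> t i * (1 - \<eta> * (lhat t i - m)))"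
      unfolding m_def by (intro sum.cong refl \<pi>_Suc[OF t])
    also have "\<dots> = (\<Sum>i\<in>{1..K}. \<pi> t i) - \<eta> * mix t + \<eta> * m * (\<Sum>i\<in>{1..K}. \<pi> t i)"
      by (simp add: algebra_simps sum_subtractf sum.distrib sum_distrib_left)
    finally show ?thesis
      using sum1 pos factor_pos by (simp add: m_def \<pi>_Suc[OF t])
  qed
qed simp

lemma abs_\<eta>_update_le:
  assumes "1 \<le> t" "i \<in> {1..K}"
  shows "\<bar>\<eta> * (lhat t i - mix t)\<bar> \<le> 1/2"
proof -
  have pos: "\<And>j. j \<in> {1..K} \<Longrightarrow> 0 \<le> \<pi> t j" and sum1: "(\<Sum>j\<in>{1..K}. \<pi> t j) = 1"
    using \<pi>_distribution[OF assms(1)] by (auto simp: less_imp_le)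
  show ?thesis
    unfolding right_diff_distrib
    using \<eta>_lhat_bounds[OF pos[OF assms(2)]] \<eta>_mix_bounds[OF pos sum1]
    by linarith
qed

lemma ln_\<pi>_eq_sum:
  assumes "i \<in> {1..K}"
  shows "ln (\<pi> (n + 1) i) = - ln K + (\<Sum>t=1..n. ln (1 - \<eta> * (lhat t i - mix t)))"
proof (induction n)
  case 0
  then show ?case by (simp add: \<pi>_1 ln_div)
next
  case (Suc n)
  have "0 < \<pi> (Suc n) i"
    using \<pi>_distribution[of "Suc n"] assms by auto
  moreover have "0 < 1 - \<eta> * (lhat (Suc n) i - mix (Suc n))"
    using abs_\<eta>_update_le[of "Suc n" i] assms by auto
  ultimately have "ln (\<pi> (Suc n + 1) i) = ln (\<pi> (Suc n) i) + ln (1 - \<eta> * (lhat (Suc n) i - mix (Suc n)))"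
    by (simp add: \<pi>_Suc ln_mult)
  then show ?case using Suc.IH by simp
qed

theorem regret_bound:
  assumes "i \<in> {1..K}"
  shows "(\<Sum>t=1..n. mix t) - (\<Sum>t=1..n. lhat t i)
    \<ge> (ln (\<pi> (n + 1) i) + ln K) / \<eta> + \<eta> / 4 * (\<Sum>t=1..n. (lhat t i - mix t)\<^sup>2)"
proof -
  define x where "x t = lhat t i - mix t" for t
  have "ln (\<pi> (n + 1) i) + ln K = (\<Sum>t=1..n. ln (1 - \<eta> * x t))"
    using ln_\<pi>_eq_sum[OF assms] by (simp add: x_def)
  also have "\<dots> \<le> (\<Sum>t=1..n. - (\<eta> * x t) - (\<eta> * x t)\<^sup>2 / 4)"
    using abs_\<eta>_update_le[OF _ assms] by (intro sum_mono ln_one_minus_le) (simp add: x_def)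
  also have "\<dots> = \<eta> * (- (\<Sum>t=1..n. x t) - \<eta> / 4 * (\<Sum>t=1..n. (x t)\<^sup>2))"
    by (simp add: sum_subtractf sum_negf sum_distrib_left power_mult_distrib sum_divide_distrib
        algebra_simps power2_eq_square)
  finally have "(ln (\<pi> (n + 1) i) + ln K) / \<eta> \<le> - (\<Sum>t=1..n. x t) - \<eta> / 4 * (\<Sum>t=1..n. (x t)\<^sup>2)"
    using \<eta>_pos by (simp add: pos_divide_le_eq mult.commute)
  then show ?thesis
    by (simp add: x_def sum_subtractf)
qed

end

theorem mainTheorem8:
  fixes T :: nat and \<eta> \<gamma> :: real
  assumes "T \<ge> 1" and "100 dvd T" and "valid_params 2 \<eta> \<gamma>"
  shows "AE h in measure_pmf (wsu_hist 2 \<eta> \<gamma> (two_phase_loss T) T).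
    (let I = hist_fun h;
         p = wsu_pi 2 \<eta> \<gamma> (two_phase_loss T) I;
         lh = wsu_lhat 2 \<eta> \<gamma> (two_phase_loss T) I
     in (\<Sum>t=1..T. \<Sum>j\<in>{1..2}. p t j * lh t j) - (\<Sum>t=1..T. lh t 1)
        \<ge> (ln (p (T+1) 1) + ln (real 2)) / \<eta>
          + \<eta> / 4 * (\<Sum>t=1..T. (lh t 1 - (\<Sum>j\<in>{1..2}. p t j * lh t j))^2))"
proof -
  have run: "wsu_ux_run 2 \<eta> \<gamma> (two_phase_loss T)"
    using assms(3) by unfold_locales (auto simp: two_phase_loss_def)
  show ?thesis
    unfolding Let_def by (intro AE_I2 wsu_ux_run.regret_bound[OF run]) simp
qed

end
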